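(* Let $q(w)=w^4$, $r_1=1$, $r_2=e^{2i\pi/3}$, $r_3=e^{4i\pi/3}$, and let $R>0$. There exist $0<\lambda<1$, $\epsilon_0>0$, $l_0\ge1$ and, for each $i\in\{1,2,3\}$, a family $(U_i^l)_{l\ge l_0}$ of neighborhoods of $r_i$ whose diameters converge exponentially fast to $0$ as $l\to\infty$, such that for each $l\ge l_0$ and each $\alpha\in\mathbb{C}^*$ the map $g_\alpha(z,w):=(\lambda z+\alpha w,q^l(w))$ satisfies $$\overline{(\alpha\epsilon_0^{-1}\mathbb{D})\times(R\mathbb{D}\setminus R^{-1}\mathbb{D})}\subset g_\alpha\Big((\alpha\epsilon_0^{-1}\mathbb{D})\times\textstyle\bigcup_{i=1}^3U_i^l\Big).$$
   Context: $\mathbb{D}$ is the unit disc; $tE=\{tz:z\in E\}$ for $t\in\mathbb{C}^*$, so $\alpha\epsilon_0^{-1}\mathbb{D}$ is the disc of radius $|\alpha|/\epsilon_0$ centered at $0$. *)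

theory Defs
  imports "HOL-Analysis.Analysis"
begin

definition q :: "complex \<Rightarrow> complex" where
  "q w = w ^ 4"

definition root3 :: "nat \<Rightarrow> complex" where
  "root3 i = (if i = 1 then 1 else if i = 2 then exp (2 * pi * \<i> / 3) else exp (4 * pi * \<i> / 3))"

definition g_map :: "real \<Rightarrow> complex \<Rightarrow> nat \<Rightarrow> complex \<times> complex \<Rightarrow> complex \<times> complex" where
  "g_map lam \<alpha> l zw = (of_real lam * fst zw + \<alpha> * snd zw, (q ^^ l) (snd zw))"

end

theory Submission
  imports Defs "HOL-Complex_Analysis.Complex_Analysis"
begin

text \<open>
  Take \<open>\<lambda> = 199/200\<close>, \<open>\<epsilon>\<^sub>0 = 1/6\<close> and for \<open>U\<^sub>i\<^sup>l\<close> the closed disc about \<open>r\<^sub>i\<close>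
  of radius \<open>2 (\<bar>ln R\<bar> + \<pi>) / 4^l\<close>. Given \<open>(z', w')\<close> in the closed product, put
  \<open>v = z'/\<alpha>\<close>, so that \<open>\<bar>v\<bar> \<le> 6\<close>. Some cube root of unity \<open>r\<^sub>i\<close> is within angle
  \<open>\<pi>/3\<close> of \<open>v\<close>; already the weak consequence \<open>\<bar>v\<bar> \<le> 6 Re (v cnj r\<^sub>i)\<close> gives
  \<open>\<bar>v - r\<^sub>i\<bar>\<^sup>2 \<le> \<bar>v\<bar>\<^sup>2 - \<bar>v\<bar>/3 + 1 \<le> 35\<close>, so \<open>\<bar>v - r\<^sub>i\<bar> \<le> 5.92\<close>.
  Since \<open>r\<^sub>i ^ 4^l = r\<^sub>i\<close>, the \<open>4^l\<close>-th root \<open>w = r\<^sub>i exp (Ln (w'/r\<^sub>i) / 4^l)\<close> of \<open>w'\<close> lies in \<open>U\<^sub>i\<^sup>l\<close>, within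
  \<open>0.03\<close> of \<open>r\<^sub>i\<close> for large \<open>l\<close>. Then \<open>z = (z' - \<alpha> w) / \<lambda>\<close> has
  \<open>\<bar>z\<bar> \<le> \<bar>\<alpha>\<bar> (5.92 + 0.03) / \<lambda> < 6 \<bar>\<alpha>\<bar>\<close> and \<open>g\<^sub>\<alpha> (z, w) = (z', w')\<close>.
\<close>

lemma funpow_q: "(q ^^ l) w = w ^ 4 ^ l"
  by (induction l) (simp_all add: q_def power_mult[symmetric] mult.commute)

lemma root3_2: "root3 2 = Complex (-1/2) (sqrt 3 / 2)"
  by (simp add: root3_def exp_eq_polar cis.ctr cos_120 sin_120 complex_eq_iff)

lemma root3_3: "root3 3 = Complex (-1/2) (- sqrt 3 / 2)"
proof -
  have angle: "4 * pi / 3 = pi / 3 + pi" by simp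
  have "cos (4 * pi / 3) = -1/2" unfolding angle cos_add by (simp add: cos_60)
  moreover have "sin (4 * pi / 3) = - sqrt 3 / 2" unfolding angle sin_add by (simp add: sin_60)
  ultimately show ?thesis
    by (simp add: root3_def exp_eq_polar cis.ctr complex_eq_iff)
qed

lemma root3_3_eq_cnj: "root3 3 = cnj (root3 2)"
  by (simp add: root3_2 root3_3 complex_eq_iff)

lemma root3_cases:
  assumes "i \<in> {1,2,3}"
  obtains "root3 i = 1" | "root3 i = root3 2" | "root3 i = cnj (root3 2)"
  using assms root3_3_eq_cnj by (auto simp: root3_def)

lemma norm_root3: "i \<in> {1,2,3} \<Longrightarrow> cmod (root3 i) = 1"
proof -
  have "cmod (root3 2) = 1"
    by (simp add: root3_2 cmod_def power2_eq_square)
  then show "i \<in> {1,2,3} \<Longrightarrow> cmod (root3 i) = 1"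
    by (elim root3_cases) simp_all
qed

lemma root3_cube: "i \<in> {1,2,3} \<Longrightarrow> root3 i ^ 3 = 1"
proof -
  have "sqrt 3 * sqrt 3 = (3::real)" by simp
  then have "root3 2 ^ 3 = 1"
    by (simp add: root3_2 power3_eq_cube complex_eq_iff algebra_simps)
  then show "i \<in> {1,2,3} \<Longrightarrow> root3 i ^ 3 = 1"
    by (elim root3_cases) (simp_all flip: complex_cnj_power)
qed

lemma root3_power_4_power: "i \<in> {1,2,3} \<Longrightarrow> root3 i ^ 4 ^ l = root3 i"
proof -
  assume i: "i \<in> {1,2,3}"
  have "(4::nat) ^ l mod 3 = 1"
    using power_mod[of "4::nat" 3 l] by simp
  then obtain k where "(4::nat) ^ l = 3 * k + 1"
    by (metis mod_div_mult_eq add.commute mult.commute)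
  then show ?thesis using root3_cube[OF i] by (simp add: power_add power_mult)
qed

lemma norm_diff_unit_power2:
  assumes "cmod r = 1"
  shows "cmod (v - r) ^ 2 = cmod v ^ 2 - 2 * Re (v * cnj r) + 1"
proof -
  have "Re r ^ 2 + Im r ^ 2 = 1" using assms by (simp add: cmod_power2[symmetric])
  then show ?thesis by (simp add: cmod_power2 power2_diff algebra_simps)
qed

lemma Re_mult_cnj_root3_2_ge:
  assumes "Im v \<ge> 0" and "Re v < Im v"
  shows "cmod v \<le> 6 * Re (v * cnj (root3 2))"
proof -
  have "5/3 \<le> sqrt (3::real)" by (rule real_le_rsqrt) (simp add: power2_eq_square)
  then have "5/3 * Im v \<le> sqrt 3 * Im v" using assms(1) by (rule mult_right_mono)
  moreover have "cmod v \<le> \<bar>Re v\<bar> + Im v" using cmod_le[of v] assms(1) by simp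
  moreover have "Re (v * cnj (root3 2)) = - Re v / 2 + sqrt 3 * Im v / 2"
    by (simp add: root3_2)
  ultimately show ?thesis using assms by (cases "Re v \<ge> 0") linarith+
qed

lemma exists_root3_Re_ge: "\<exists>i\<in>{1,2,3}. cmod v \<le> 6 * Re (v * cnj (root3 i))"
proof -
  consider "\<bar>Im v\<bar> \<le> Re v" | "Re v < Im v" "Im v \<ge> 0" | "Re v < - Im v" "Im v < 0"
    by linarith
  then show ?thesis
  proof cases
    case 1
    then have "cmod v \<le> 6 * Re (v * cnj (root3 1))"
      using cmod_le[of v] by (simp add: root3_def)
    then show ?thesis by blast
  next
    case 2
    then show ?thesis using Re_mult_cnj_root3_2_ge by blast
  next
    case 3
    \<comment> \<open>reflection in the real axis swaps \<open>root3 2\<close> and \<open>root3 3\<close>\<close>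
    then have "cmod (cnj v) \<le> 6 * Re (cnj v * cnj (root3 2))"
      by (intro Re_mult_cnj_root3_2_ge) simp_all
    then have "cmod v \<le> 6 * Re (v * cnj (root3 3))"
      by (simp add: root3_3_eq_cnj)
    then show ?thesis by blast
  qed
qed

lemma exists_root3_near:
  assumes "cmod v \<le> 6"
  shows "\<exists>i\<in>{1,2,3}. cmod (v - root3 i) \<le> 592/100"
proof -
  obtain i where i: "i \<in> {1,2,3}" and Re: "cmod v \<le> 6 * Re (v * cnj (root3 i))"
    using exists_root3_Re_ge by blast
  have "cmod v ^ 2 \<le> 6 * cmod v"
    using assms mult_right_mono[of "cmod v" 6 "cmod v"] by (simp add: power2_eq_square)
  then have "cmod (v - root3 i) ^ 2 \<le> 35"
    using assms Re norm_diff_unit_power2[OF norm_root3[OF i], of v] by linarith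
  also have "\<dots> \<le> (592/100) ^ 2" by (simp add: power2_eq_square)
  finally have "cmod (v - root3 i) \<le> 592/100" by (rule power2_le_imp_le) simp
  then show ?thesis using i by blast
qed

lemma norm_Ln_le: "u \<noteq> 0 \<Longrightarrow> cmod (Ln u) \<le> \<bar>ln (cmod u)\<bar> + pi"
  using cmod_le[of "Ln u"] mpi_less_Im_Ln[of u] Im_Ln_le_pi[of u] by simp

lemma abs_ln_le_abs_ln:
  fixes x R :: real
  assumes "R > 0" "1/R \<le> x" "x \<le> R"
  shows "\<bar>ln x\<bar> \<le> \<bar>ln R\<bar>"
proof -
  have "0 < 1/R" using assms(1) by simp
  then have "x > 0" using assms(2) by linarith
  then have "ln x \<le> ln R" "ln (1/R) \<le> ln x" using assms by simp_all
  then show ?thesis using assms(1) by (simp add: ln_div)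
qed

lemma exists_power_root_near:
  fixes r u :: complex and N :: nat
  assumes "cmod r = 1" "r ^ N = r" "N > 0" "u \<noteq> 0" "cmod (Ln u) \<le> N / 2"
  shows "\<exists>w. w ^ N = r * u \<and> cmod (w - r) \<le> 3/2 * (cmod (Ln u) / N)"
proof -
  define s where "s = Ln u / of_nat N"
  have "cmod s \<le> 1/2"
    using assms(3,5) by (simp add: s_def norm_divide divide_le_eq)
  then have "cmod (exp s - 1) \<le> 3/2 * cmod s" by (rule norm_exp_bounds(2))
  moreover have "(r * exp s) ^ N = r * u"
    using assms(2-4) by (simp add: s_def power_mult_distrib exp_of_nat_mult[symmetric])
  moreover have "r * exp s - r = r * (exp s - 1)" by (simp add: algebra_simps)
  then have "cmod (r * exp s - r) = cmod (exp s - 1)" by (simp add: norm_mult assms(1))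
  ultimately show ?thesis by (auto simp: s_def norm_divide)
qed

lemma exists_power_root_near_root3:
  fixes R :: real and w' :: complex
  defines "K \<equiv> \<bar>ln R\<bar> + pi"
  assumes i: "i \<in> {1,2,3}" and "R > 0" "50 * K \<le> 4 ^ l" "1/R \<le> cmod w'" "cmod w' \<le> R"
  shows "\<exists>w. w ^ 4 ^ l = w' \<and> cmod (w - root3 i) \<le> 3/100 \<and> cmod (w - root3 i) \<le> 2 * K / 4 ^ l"
proof -
  have K: "K > 0" unfolding K_def using pi_gt_zero by linarith
  define u where "u = w' / root3 i"
  have r: "cmod (root3 i) = 1" using norm_root3[OF i] .
  then have r0: "root3 i \<noteq> 0" by auto
  have "0 < 1/R" using assms(3) by simp
  then have "w' \<noteq> 0" using assms(5) by auto
  then have u: "u \<noteq> 0" "cmod u = cmod w'" using r by (auto simp: u_def norm_divide)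
  have "cmod (Ln u) \<le> K"
    using norm_Ln_le[OF u(1)] abs_ln_le_abs_ln[OF assms(3,5,6)] u(2) by (simp add: K_def)
  moreover have "K / 4 ^ l \<le> 1/50" using assms(4) K by (simp add: divide_le_eq)
  ultimately have Ln_small: "cmod (Ln u) \<le> real (4 ^ l) / 2" "cmod (Ln u) / 4 ^ l \<le> 1/50"
    using K by (auto simp: divide_le_eq)
  obtain w where w: "w ^ 4 ^ l = w'" and near: "cmod (w - root3 i) \<le> 3/2 * (cmod (Ln u) / 4 ^ l)"
    using exists_power_root_near[OF r root3_power_4_power[OF i] _ u(1) Ln_small(1)]
    by (auto simp: u_def r0)
  have "cmod (Ln u) / 4 ^ l \<le> K / 4 ^ l"
    using \<open>cmod (Ln u) \<le> K\<close> by (simp add: divide_right_mono)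
  then have "cmod (w - root3 i) \<le> 3/2 * (K / 4 ^ l)"
    using near by linarith
  also have "\<dots> \<le> 2 * K / 4 ^ l" using K by (simp add: field_simps)
  finally have "cmod (w - root3 i) \<le> 2 * K / 4 ^ l" .
  moreover have "cmod (w - root3 i) \<le> 3/100" using near Ln_small(2) by linarith
  ultimately show ?thesis using w by blast
qed

lemma g_map_covers_point:
  fixes R :: real and \<alpha> z' w' :: complex
  defines "K \<equiv> \<bar>ln R\<bar> + pi"
  assumes "R > 0" "50 * K \<le> 4 ^ l" "\<alpha> \<noteq> 0"
    and "cmod z' \<le> 6 * cmod \<alpha>" "1/R \<le> cmod w'" "cmod w' \<le> R"
  shows "\<exists>i\<in>{1,2,3}. \<exists>z w. cmod z < 6 * cmod \<alpha> \<and> cmod (w - root3 i) \<le> 2 * K / 4 ^ l \<and>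
           g_map (199/200) \<alpha> l (z, w) = (z', w')"
proof -
  have "cmod (z' / \<alpha>) \<le> 6"
    using assms(4,5) by (simp add: norm_divide divide_le_eq)
  then obtain i where i: "i \<in> {1,2,3}" and near_v: "cmod (z' / \<alpha> - root3 i) \<le> 592/100"
    using exists_root3_near by blast
  obtain w where w: "w ^ 4 ^ l = w'" and near_w: "cmod (w - root3 i) \<le> 3/100"
    and w_in: "cmod (w - root3 i) \<le> 2 * K / 4 ^ l"
    using exists_power_root_near_root3[OF i assms(2) assms(3)[unfolded K_def] assms(6,7)]
    unfolding K_def by blast
  have "cmod (z' / \<alpha> - w) \<le> 595/100"
    using norm_triangle_ineq[of "z' / \<alpha> - root3 i" "root3 i - w"] near_v near_w
    by (simp add: norm_minus_commute)
  moreover have "z' - \<alpha> * w = \<alpha> * (z' / \<alpha> - w)" using assms(4) by (simp add: algebra_simps)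
  ultimately have "cmod ((z' - \<alpha> * w) / of_real (199/200)) < 6 * cmod \<alpha>"
    using assms(4) by (simp add: norm_mult norm_divide)
  moreover have "g_map (199/200) \<alpha> l ((z' - \<alpha> * w) / of_real (199/200), w) = (z', w')"
    by (simp add: g_map_def funpow_q w field_simps)
  ultimately show ?thesis using i w_in by blast
qed

lemma closure_annulus_product_subset:
  fixes a R r :: real
  shows "closure (ball (0::'a::real_normed_vector) a \<times> (ball (0::'b::real_normed_vector) R - ball 0 r))
    \<subseteq> cball 0 a \<times> (cball 0 R - ball 0 r)"
  by (intro closure_minimal closed_Times closed_Diff) auto

definition root3_nbhd :: "real \<Rightarrow> nat \<Rightarrow> nat \<Rightarrow> complex set" where
  "root3_nbhd R i l = cball (root3 i) (2 * (\<bar>ln R\<bar> + pi) / 4 ^ l)"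

lemma root3_nbhd_contains_ball:
  "\<exists>V. open V \<and> root3 i \<in> V \<and> V \<subseteq> root3_nbhd R i l"
proof -
  have "0 < \<bar>ln R\<bar> + pi" using pi_gt_zero by linarith
  then show ?thesis
    by (intro exI[of _ "ball (root3 i) (2 * (\<bar>ln R\<bar> + pi) / 4 ^ l)"]) (auto simp: root3_nbhd_def)
qed

lemma diameter_root3_nbhd:
  "bounded (root3_nbhd R i l) \<and> diameter (root3_nbhd R i l) \<le> 4 * (\<bar>ln R\<bar> + pi) * (1/4) ^ l"
proof -
  have "0 < \<bar>ln R\<bar> + pi" using pi_gt_zero by linarith
  then show ?thesis by (simp add: root3_nbhd_def power_one_over)
qed

lemma g_map_image_covers:
  assumes "R > 0" "50 * (\<bar>ln R\<bar> + pi) \<le> 4 ^ l" "\<alpha> \<noteq> 0"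
  shows "closure (ball 0 (cmod \<alpha> / (1/6)) \<times> (ball 0 R - ball 0 (1 / R)))
    \<subseteq> g_map (199/200) \<alpha> l ` (ball 0 (cmod \<alpha> / (1/6)) \<times> (\<Union>i\<in>{1,2,3}. root3_nbhd R i l))"
proof
  fix p :: "complex \<times> complex"
  assume "p \<in> closure (ball 0 (cmod \<alpha> / (1/6)) \<times> (ball 0 R - ball 0 (1 / R)))"
  then have "p \<in> cball 0 (cmod \<alpha> / (1/6)) \<times> (cball 0 R - ball 0 (1/R))"
    using closure_annulus_product_subset by blast
  then obtain z' w' :: complex
    where p: "p = (z', w')" and bounds: "cmod z' \<le> 6 * cmod \<alpha>" "1/R \<le> cmod w'" "cmod w' \<le> R"
    by (cases p) auto
  obtain i z w where i: "i \<in> {1,2,3}" and zw: "cmod z < 6 * cmod \<alpha>"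
    "cmod (w - root3 i) \<le> 2 * (\<bar>ln R\<bar> + pi) / 4 ^ l"
    and g: "g_map (199/200) \<alpha> l (z, w) = (z', w')"
    using g_map_covers_point[OF assms bounds] by blast
  have "(z, w) \<in> ball 0 (cmod \<alpha> / (1/6)) \<times> (\<Union>i\<in>{1,2,3}. root3_nbhd R i l)"
    using i zw by (auto simp: root3_nbhd_def dist_norm norm_minus_commute)
  then show "p \<in> g_map (199/200) \<alpha> l ` (ball 0 (cmod \<alpha> / (1/6)) \<times> (\<Union>i\<in>{1,2,3}. root3_nbhd R i l))"
    using g p by (metis image_eqI)
qed

theorem lemma6p1:
  fixes R :: real
  assumes "R > 0"
  shows "\<exists>(lam::real) (\<epsilon>0::real) (l0::nat) (U :: nat \<Rightarrow> nat \<Rightarrow> complex set).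
           0 < lam \<and> lam < 1 \<and> \<epsilon>0 > 0 \<and> l0 \<ge> 1 \<and>
           (\<forall>i\<in>{1,2,3}. \<forall>l\<ge>l0. \<exists>V. open V \<and> root3 i \<in> V \<and> V \<subseteq> U i l) \<and>
           (\<forall>i\<in>{1,2,3}. \<exists>C \<theta>. C > 0 \<and> 0 < \<theta> \<and> \<theta> < 1 \<and>
              (\<forall>l\<ge>l0. bounded (U i l) \<and> diameter (U i l) \<le> C * \<theta> ^ l)) \<and>
           (\<forall>l\<ge>l0. \<forall>\<alpha>::complex. \<alpha> \<noteq> 0 \<longrightarrow>
              closure (ball 0 (cmod \<alpha> / \<epsilon>0) \<times> (ball 0 R - ball 0 (1 / R)))
                \<subseteq> g_map lam \<alpha> l ` (ball 0 (cmod \<alpha> / \<epsilon>0) \<times> (\<Union>i\<in>{1,2,3}. U i l)))"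
proof -
  have "0 < \<bar>ln R\<bar> + pi" using pi_gt_zero by linarith
  obtain n where n: "50 * (\<bar>ln R\<bar> + pi) < 4 ^ n"
    using real_arch_pow[of 4 "50 * (\<bar>ln R\<bar> + pi)"] by auto
  have large: "50 * (\<bar>ln R\<bar> + pi) \<le> 4 ^ l" if "l \<ge> Suc n" for l :: nat
  proof -
    have "(4::real) ^ n \<le> 4 ^ l" by (rule power_increasing) (use that in simp_all)
    with n show ?thesis by linarith
  qed
  have decay: "\<exists>C \<theta>. C > 0 \<and> 0 < \<theta> \<and> \<theta> < 1 \<and>
      (\<forall>l\<ge>Suc n. bounded (root3_nbhd R i l) \<and> diameter (root3_nbhd R i l) \<le> C * \<theta> ^ l)" for i
    using \<open>0 < \<bar>ln R\<bar> + pi\<close> diameter_root3_nbhd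
    by (intro exI[of _ "4 * (\<bar>ln R\<bar> + pi)"] exI[of _ "1/4"]) simp
  show ?thesis
    by (rule exI[of _ "199/200"], rule exI[of _ "1/6"], rule exI[of _ "Suc n"],
        rule exI[of _ "root3_nbhd R"])
      (intro conjI ballI allI impI root3_nbhd_contains_ball decay
        g_map_image_covers[OF assms large]; simp)
qed

end
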